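(* There exists an invertible $21\times21$ binary matrix such that the corresponding linear kernel has partial distance sequence $(1,2,2,2,2,2,4,4,4,4,4,4,8,8,8,8,8,8,12,12,12)$. Consequently $E_{21}\ge\frac1{21}\sum_{i=0}^{20}\log_{21}D_{min}^{(i)}\approx0.49604$.
   Context: A kernel of dimension $\ell$ is a bijection $g:\{0,1\}^\ell\to\{0,1\}^\ell$; a linear kernel is $g({\bf u})={\bf u}G$ over $\mathbb{F}_2$ for an invertible $\ell\times\ell$ binary matrix $G$. ${\bf a}\bullet{\bf b}$ denotes concatenation, $d_H$ Hamming distance. Partial distances: $D_{min}^{(i)}=\min\{d_H(g({\bf w}\bullet 0\bullet{\bf u}),g({\bf w}\bullet 1\bullet {\bf v})) : {\bf w}\in\{0,1\}^i,\ {\bf u},{\bf v}\in\{0,1\}^{\ell-i-1}\}$, $i=0,\dots,\ell-1$; exponent $E(g)=\frac1\ell\sum_{i}\log_\ell D_{min}^{(i)}$; $E_\ell=\max_g E(g)$ over all kernels of dimension $\ell$. *)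

theory Defs
  imports Complex_Main
begin

text \<open>Binary vectors of length l are bool lists of length l (True = 1).\<close>

definition words :: "nat \<Rightarrow> bool list set" where
  "words l = {xs. length xs = l}"

definition hdist :: "bool list \<Rightarrow> bool list \<Rightarrow> nat" where
  "hdist xs ys = card {i. i < length xs \<and> xs ! i \<noteq> ys ! i}"

definition is_kernel :: "nat \<Rightarrow> (bool list \<Rightarrow> bool list) \<Rightarrow> bool" where
  "is_kernel l g \<longleftrightarrow> bij_betw g (words l) (words l)"

text \<open>Binary l x l matrices as functions (row, column) with indices below l;
  arithmetic over F_2 (sum = parity).\<close>
definition bmat_mult :: "nat \<Rightarrow> (nat \<Rightarrow> nat \<Rightarrow> bool) \<Rightarrow> (nat \<Rightarrow> nat \<Rightarrow> bool) \<Rightarrow> nat \<Rightarrow> nat \<Rightarrow> bool" where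
  "bmat_mult l A B i j = odd (card {k. k < l \<and> A i k \<and> B k j})"

definition binvertible :: "nat \<Rightarrow> (nat \<Rightarrow> nat \<Rightarrow> bool) \<Rightarrow> bool" where
  "binvertible l G \<longleftrightarrow> (\<exists>H. \<forall>i<l. \<forall>j<l.
      bmat_mult l G H i j = (i = j) \<and> bmat_mult l H G i j = (i = j))"

definition lin_kernel :: "nat \<Rightarrow> (nat \<Rightarrow> nat \<Rightarrow> bool) \<Rightarrow> bool list \<Rightarrow> bool list" where
  "lin_kernel l G u = map (\<lambda>j. odd (card {i. i < l \<and> u ! i \<and> G i j})) [0..<l]"

definition partial_dist :: "nat \<Rightarrow> (bool list \<Rightarrow> bool list) \<Rightarrow> nat \<Rightarrow> nat" where
  "partial_dist l g i = Min {hdist (g (w @ False # u)) (g (w @ True # v)) | w u v.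
      length w = i \<and> length u = l - i - 1 \<and> length v = l - i - 1}"

definition kernel_exponent :: "nat \<Rightarrow> (bool list \<Rightarrow> bool list) \<Rightarrow> real" where
  "kernel_exponent l g = (1 / real l) * (\<Sum>i<l. log (real l) (real (partial_dist l g i)))"

definition E_opt :: "nat \<Rightarrow> real" where
  "E_opt l = Max {kernel_exponent l g | g. is_kernel l g}"

definition pd_seq :: "nat list" where
  "pd_seq = [1,2,2,2,2,2,4,4,4,4,4,4,8,8,8,8,8,8,12,12,12]"

end

theory Submission
  imports Defs
begin

(* The kernel is the linear map u \<mapsto> u G for an explicit 21 x 21 binary matrix G, whose rows
   g_0, ..., g_20 are stored as bit strings.  For a linear kernel the i-th partial distance is
   the minimum weight of a vector g_i + (a combination of g_{i+1}, ..., g_20), because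
   g(w 0 u) + g(w 1 v) = g(0^i 1 (u + v)).  Hence D^(i) = wt(g_i) as soon as every such coset
   vector has weight at least wt(g_i).  These lower bounds come from four general facts:
     - invertibility of G makes every coset vector nonzero (i = 0);
     - rows g_1, ..., g_20 have even weight, so all their combinations are even (i >= 1);
     - rows g_6, ..., g_20 are annihilated by a 21 x 6 parity-check matrix with pairwise
       distinct rows, which excludes weight 2 (i >= 6);
     - the spans of g_12, ..., g_20 and g_18, g_19, g_20 are enumerated exhaustively (i >= 12).  The
   exponent bound follows because E_opt is a maximum over a finite set of kernel exponents. *)

section \<open>Vectors over F_2 as bool lists\<close>

fun xorl :: "bool list \<Rightarrow> bool list \<Rightarrow> bool list" where
  "xorl (a # as) (b # bs) = (a \<noteq> b) # xorl as bs"
| "xorl _ _ = []"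

fun weight :: "bool list \<Rightarrow> nat" where
  "weight [] = 0"
| "weight (a # as) = (if a then Suc (weight as) else weight as)"

fun lincomb :: "nat \<Rightarrow> bool list list \<Rightarrow> bool list \<Rightarrow> bool list" where
  "lincomb n (r # rs) (b # bs) = (if b then xorl r (lincomb n rs bs) else lincomb n rs bs)"
| "lincomb n _ _ = replicate n False"

definition id_rows :: "nat \<Rightarrow> bool list list" where
  "id_rows n = map (\<lambda>i. map (\<lambda>j. i = j) [0..<n]) [0..<n]"

definition row_span :: "nat \<Rightarrow> bool list list \<Rightarrow> bool list set" where
  "row_span n rs = {lincomb n rs z | z. length z = length rs}"

lemma xorl_length [simp]: "length (xorl a b) = min (length a) (length b)"
  by (induction a b rule: xorl.induct) auto

lemma xorl_nth: "j < length a \<Longrightarrow> j < length b \<Longrightarrow> xorl a b ! j = (a ! j \<noteq> b ! j)"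
  by (induction a b arbitrary: j rule: xorl.induct) (auto simp: nth_Cons split: nat.split)

lemma xorl_zero_left: "length v = n \<Longrightarrow> xorl (replicate n False) v = v"
  by (induction v arbitrary: n) auto

lemma xorl_zero_right: "length v = n \<Longrightarrow> xorl v (replicate n False) = v"
  by (induction v arbitrary: n) auto

lemma xorl_left_commute:
  "length a = n \<Longrightarrow> length b = n \<Longrightarrow> length c = n \<Longrightarrow> xorl (xorl a b) c = xorl b (xorl a c)"
  by (rule nth_equalityI) (auto simp: xorl_nth)

lemma xorl_common_prefix:
  "length u = length v \<Longrightarrow>
   xorl (w @ False # u) (w @ True # v) = replicate (length w) False @ True # xorl u v"
  by (induction w) auto

lemma card_less_Suc_front:
  "card {i. i < Suc m \<and> P i} = (if P 0 then 1 else 0) + card {i. i < m \<and> P (Suc i)}"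
proof -
  have split: "{i. i < Suc m \<and> P i} = (if P 0 then {0} else {}) \<union> Suc ` {i. i < m \<and> P (Suc i)}"
    by (auto simp: image_iff less_Suc_eq_0_disj)
  have "card (Suc ` {i. i < m \<and> P (Suc i)}) = card {i. i < m \<and> P (Suc i)}"
    by (rule card_image) simp
  then show ?thesis unfolding split by (auto simp: card_insert_if)
qed

lemma card_less_Suc_back:
  "card {i. i < Suc m \<and> P i} = card {i. i < m \<and> P i} + (if P m then 1 else 0)"
proof -
  have "{i. i < Suc m \<and> P i} = {i. i < m \<and> P i} \<union> (if P m then {m} else {})"
    by (auto simp: less_Suc_eq)
  then show ?thesis by (auto simp: card_insert_if)
qed

lemma odd_card_xor:
  "odd (card {i. i < (m::nat) \<and> (P i \<noteq> Q i)})
     = (odd (card {i. i < m \<and> P i}) \<noteq> odd (card {i. i < m \<and> Q i}))"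
  by (induction m) (auto simp: card_less_Suc_back)

lemma weight_card: "weight v = card {i. i < length v \<and> v ! i}"
  by (induction v) (auto simp: card_less_Suc_front)

lemma weight_zero [simp]: "weight (replicate n False) = 0"
  by (induction n) auto

lemma weight_le_length: "weight v \<le> length v"
  by (induction v) auto

lemma weight_eq_0: "weight v = 0 \<Longrightarrow> v = replicate (length v) False"
  by (induction v) (auto split: if_splits)

lemma weight_xorl_parity:
  "length a = length b \<Longrightarrow> odd (weight (xorl a b)) = (odd (weight a) \<noteq> odd (weight b))"
  by (induction a b rule: list_induct2) auto

lemma hdist_weight: "length a = length b \<Longrightarrow> hdist a b = weight (xorl a b)"
proof -
  assume "length a = length b"
  then have "{i. i < length (xorl a b) \<and> xorl a b ! i} = {i. i < length a \<and> a ! i \<noteq> b ! i}"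
    by (auto simp: xorl_nth)
  then show ?thesis by (simp add: hdist_def weight_card)
qed

section \<open>Linear combinations of rows\<close>

lemma lincomb_length [simp]: "\<forall>r\<in>set rs. length r = n \<Longrightarrow> length (lincomb n rs x) = n"
  by (induction n rs x rule: lincomb.induct) auto

lemma lincomb_nth:
  "length x = length rs \<Longrightarrow> \<forall>r\<in>set rs. length r = n \<Longrightarrow> j < n \<Longrightarrow>
   lincomb n rs x ! j = odd (card {i. i < length rs \<and> x ! i \<and> rs ! i ! j})"
  by (induction x rs rule: list_induct2) (auto simp: card_less_Suc_front xorl_nth)

lemma lincomb_xorl:
  assumes "length a = length rs" "length b = length rs" "\<forall>r\<in>set rs. length r = n"
  shows "lincomb n rs (xorl a b) = xorl (lincomb n rs a) (lincomb n rs b)"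
proof (rule nth_equalityI)
  show "length (lincomb n rs (xorl a b)) = length (xorl (lincomb n rs a) (lincomb n rs b))"
    using assms by simp
  fix j assume "j < length (lincomb n rs (xorl a b))"
  then have j: "j < n" using assms by simp
  have split: "{i. i < length rs \<and> xorl a b ! i \<and> rs ! i ! j}
      = {i. i < length rs \<and> ((a ! i \<and> rs ! i ! j) \<noteq> (b ! i \<and> rs ! i ! j))}"
    using assms by (auto simp: xorl_nth)
  have "lincomb n rs (xorl a b) ! j = odd (card {i. i < length rs \<and> xorl a b ! i \<and> rs ! i ! j})"
    using assms j by (simp add: lincomb_nth)
  also have "\<dots> = (odd (card {i. i < length rs \<and> a ! i \<and> rs ! i ! j})
                   \<noteq> odd (card {i. i < length rs \<and> b ! i \<and> rs ! i ! j}))"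
    unfolding split by (rule odd_card_xor)
  also have "\<dots> = xorl (lincomb n rs a) (lincomb n rs b) ! j"
    using assms j by (simp add: lincomb_nth xorl_nth)
  finally show "lincomb n rs (xorl a b) ! j = xorl (lincomb n rs a) (lincomb n rs b) ! j" .
qed

lemma lincomb_zero: "lincomb n rs (replicate m False) = replicate n False"
proof (induction rs arbitrary: m)
  case (Cons r rs) then show ?case by (cases m) auto
qed simp

lemma lincomb_zero_rows: "\<forall>r\<in>set rs. r = replicate n False \<Longrightarrow> lincomb n rs x = replicate n False"
  by (induction n rs x rule: lincomb.induct) (auto simp: xorl_zero_left)

lemma lincomb_zeros_append:
  "t \<le> length rs \<Longrightarrow> lincomb n rs (replicate t False @ z) = lincomb n (drop t rs) z"
proof (induction t arbitrary: rs)
  case (Suc t) then show ?case by (cases rs) auto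
qed simp

text \<open>Associativity: (x R) S = x (R S), where the rows of R S are the rows of R times S.\<close>
lemma lincomb_lincomb:
  "length x = length R \<Longrightarrow> \<forall>r\<in>set R. length r = m \<Longrightarrow> length S = m \<Longrightarrow>
   \<forall>s\<in>set S. length s = n \<Longrightarrow> lincomb n S (lincomb m R x) = lincomb n (map (lincomb n S) R) x"
  by (induction x R rule: list_induct2) (auto simp: lincomb_zero lincomb_xorl)

lemma lincomb_id_rows: "length x = n \<Longrightarrow> lincomb n (id_rows n) x = x"
proof (rule nth_equalityI)
  assume x: "length x = n"
  have rows: "\<forall>r\<in>set (id_rows n). length r = n" "length (id_rows n) = n"
    by (auto simp: id_rows_def)
  then show "length (lincomb n (id_rows n) x) = length x" using x by simp
  fix j assume "j < length (lincomb n (id_rows n) x)"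
  then have j: "j < n" using rows by simp
  have "{i. i < length (id_rows n) \<and> x ! i \<and> id_rows n ! i ! j} = (if x ! j then {j} else {})"
    using j by (auto simp: id_rows_def)
  then show "lincomb n (id_rows n) x ! j = x ! j"
    using x j rows by (simp add: lincomb_nth)
qed

definition square_rows :: "nat \<Rightarrow> bool list list \<Rightarrow> bool" where
  "square_rows l R \<longleftrightarrow> length R = l \<and> (\<forall>r\<in>set R. length r = l)"

lemma lincomb_left_inverse:
  assumes "square_rows l R" "square_rows l H" "map (lincomb l H) R = id_rows l" "length x = l"
  shows "lincomb l H (lincomb l R x) = x"
  using assms by (simp add: square_rows_def lincomb_lincomb lincomb_id_rows)

section \<open>Weight bounds on spans\<close>

lemma lincomb_in_row_span: "length z = length rs \<Longrightarrow> lincomb n rs z \<in> row_span n rs"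
  by (auto simp: row_span_def)

lemma row_span_drop_mono:
  assumes "t \<le> i" "i \<le> length rs"
  shows "row_span n (drop i rs) \<subseteq> row_span n (drop t rs)"
proof
  fix c assume "c \<in> row_span n (drop i rs)"
  then obtain z where z: "length z = length rs - i" and c: "c = lincomb n (drop i rs) z"
    by (auto simp: row_span_def)
  have "c = lincomb n (drop t rs) (replicate (i - t) False @ z)"
    using assms by (simp add: c lincomb_zeros_append)
  then show "c \<in> row_span n (drop t rs)"
    using assms z by (auto intro: lincomb_in_row_span)
qed

lemma row_span_even:
  assumes "\<forall>r\<in>set rs. even (weight r) \<and> length r = n" "c \<in> row_span n rs"
  shows "even (weight c)"
proof -
  have "even (weight (lincomb n rs x))" for x
    using assms(1)
  proof (induction n rs x rule: lincomb.induct)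
    case (1 n r rs b bs)
    then show ?case using weight_xorl_parity[of r "lincomb n rs bs"] by auto
  qed auto
  then show ?thesis using assms(2) by (auto simp: row_span_def)
qed

lemma row_span_annihilated:
  assumes "map (lincomb m H) rs = replicate (length rs) (replicate m False)"
    "\<forall>r\<in>set rs. length r = n" "length H = n" "\<forall>h\<in>set H. length h = m" "c \<in> row_span n rs"
  shows "lincomb m H c = replicate m False"
proof -
  obtain z where "length z = length rs" "c = lincomb n rs z"
    using assms(5) by (auto simp: row_span_def)
  then have "lincomb m H c = lincomb m (map (lincomb m H) rs) z"
    using assms by (simp add: lincomb_lincomb)
  then show ?thesis using assms(1) by (simp add: lincomb_zero_rows)
qed

lemma weight_two_detected:
  assumes "distinct H" "\<forall>h\<in>set H. length h = m" "length c = length H" "weight c = 2"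
  shows "lincomb m H c \<noteq> replicate m False"
proof -
  obtain a b where ab: "{k. k < length c \<and> c ! k} = {a, b}" "a \<noteq> b"
    using assms(4) card_2_iff[of "{k. k < length c \<and> c ! k}"] by (auto simp: weight_card)
  have sel: "(k < length H \<and> c ! k) = (k = a \<or> k = b)" for k
    using ab(1)[unfolded set_eq_iff, rule_format, of k] assms(3) by simp
  then have lt: "a < length H" "b < length H" by auto
  then have "H ! a \<noteq> H ! b" using assms(1) ab(2) by (simp add: nth_eq_iff_index_eq)
  moreover have "length (H ! a) = m" "length (H ! b) = m" using lt assms(2) by auto
  ultimately obtain j where j: "j < m" "H ! a ! j \<noteq> H ! b ! j"
    using list_eq_iff_nth_eq[of "H ! a" "H ! b"] by auto
  have "{k. k < length H \<and> c ! k \<and> H ! k ! j} = {k. (k = a \<or> k = b) \<and> H ! k ! j}"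
    using sel by blast
  also have "\<dots> = (if H ! a ! j then {a} else {b})" using j(2) by auto
  finally have "{k. k < length H \<and> c ! k \<and> H ! k ! j} = (if H ! a ! j then {a} else {b})" .
  then have "lincomb m H c ! j"
    using assms(2,3) j(1) by (simp add: lincomb_nth)
  then show ?thesis using j(1) by auto
qed

fun check_span :: "(bool list \<Rightarrow> bool) \<Rightarrow> bool list \<Rightarrow> bool list list \<Rightarrow> bool" where
  "check_span P acc [] = P acc"
| "check_span P acc (r # rs) = (check_span P acc rs \<and> check_span P (xorl r acc) rs)"

lemma check_span_coset:
  "length z = length rs \<Longrightarrow> check_span P acc rs \<Longrightarrow> length acc = n \<Longrightarrow>
   \<forall>r\<in>set rs. length r = n \<Longrightarrow> P (xorl (lincomb n rs z) acc)"
proof (induction z rs arbitrary: acc rule: list_induct2)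
  case Nil then show ?case by (simp add: xorl_zero_left)
next
  case (Cons b z r rs)
  then show ?case by (cases b) (auto simp: xorl_left_commute)
qed

lemma check_span_sound:
  assumes "check_span P (replicate n False) rs" "\<forall>r\<in>set rs. length r = n" "c \<in> row_span n rs"
  shows "P c"
proof -
  obtain z where "length z = length rs" "c = lincomb n rs z"
    using assms(3) by (auto simp: row_span_def)
  then show ?thesis
    using check_span_coset[of z rs P "replicate n False" n] assms(1,2) by (simp add: xorl_zero_right)
qed

section \<open>Linear kernels given by their rows\<close>

definition mat_of_rows :: "bool list list \<Rightarrow> nat \<Rightarrow> nat \<Rightarrow> bool" where
  "mat_of_rows R i j = R ! i ! j"

lemma lin_kernel_rows:
  assumes "square_rows l R" "length x = l"
  shows "lin_kernel l (mat_of_rows R) x = lincomb l R x"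
proof (rule nth_equalityI)
  show "length (lin_kernel l (mat_of_rows R) x) = length (lincomb l R x)"
    using assms by (simp add: lin_kernel_def square_rows_def)
  fix j assume "j < length (lin_kernel l (mat_of_rows R) x)"
  then have "j < l" by (simp add: lin_kernel_def)
  then show "lin_kernel l (mat_of_rows R) x ! j = lincomb l R x ! j"
    using assms by (simp add: lin_kernel_def mat_of_rows_def lincomb_nth square_rows_def)
qed

lemma bmat_mult_rows:
  assumes "square_rows l R" "square_rows l H" "i < l" "j < l"
  shows "bmat_mult l (mat_of_rows R) (mat_of_rows H) i j = lincomb l H (R ! i) ! j"
  using assms by (simp add: bmat_mult_def mat_of_rows_def lincomb_nth square_rows_def)

lemma binvertible_rows:
  assumes "square_rows l R" "square_rows l H"
    "map (lincomb l H) R = id_rows l" "map (lincomb l R) H = id_rows l"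
  shows "binvertible l (mat_of_rows R)"
  unfolding binvertible_def
proof (intro exI[of _ "mat_of_rows H"] allI impI conjI)
  fix i j assume ij: "i < l" "j < l"
  have "lincomb l H (R ! i) = id_rows l ! i" "lincomb l R (H ! i) = id_rows l ! i"
    using assms ij by (metis nth_map square_rows_def)+
  then show "bmat_mult l (mat_of_rows R) (mat_of_rows H) i j = (i = j)"
    and "bmat_mult l (mat_of_rows H) (mat_of_rows R) i j = (i = j)"
    using assms ij by (simp_all add: bmat_mult_rows id_rows_def)
qed

lemma finite_words: "finite (words n)"
  using finite_lists_length_eq[of "UNIV :: bool set" n] by (simp add: words_def)

text \<open>A linear map with a left inverse is injective, hence a bijection of {0,1}^l.\<close>
lemma is_kernel_rows:
  assumes "square_rows l R" "square_rows l H" "map (lincomb l H) R = id_rows l"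
  shows "is_kernel l (lin_kernel l (mat_of_rows R))"
proof -
  let ?g = "lin_kernel l (mat_of_rows R)"
  have "inj_on ?g (words l)"
  proof
    fix x y assume "x \<in> words l" "y \<in> words l" and eq: "?g x = ?g y"
    then have len: "length x = l" "length y = l" by (auto simp: words_def)
    have "x = lincomb l H (lincomb l R x)"
      using lincomb_left_inverse[OF assms len(1)] by simp
    also have "\<dots> = lincomb l H (lincomb l R y)"
      using eq len by (simp add: lin_kernel_rows[OF assms(1)])
    also have "\<dots> = y" using lincomb_left_inverse[OF assms len(2)] .
    finally show "x = y" .
  qed
  moreover have "?g ` words l \<subseteq> words l" by (auto simp: words_def lin_kernel_def)
  ultimately show ?thesis
    by (simp add: is_kernel_def bij_betw_def endo_inj_surj[OF finite_words])
qed

text \<open>The partial-distance pairs of a linear kernel reduce to the coset g_i + span of the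
  later rows: the two images differ by the image of 0^i 1 (u + v).\<close>
lemma hdist_lin_kernel_rows:
  assumes R: "square_rows l R" and i: "i < l"
    and lens: "length w = i" "length u = l - i - 1" "length v = l - i - 1"
  shows "hdist (lin_kernel l (mat_of_rows R) (w @ False # u)) (lin_kernel l (mat_of_rows R) (w @ True # v))
       = weight (lincomb l (drop i R) (True # xorl u v))"
proof -
  have len: "length (w @ False # u) = l" "length (w @ True # v) = l" using i lens by auto
  have rows: "\<forall>r\<in>set R. length r = l" "length R = l" using R by (auto simp: square_rows_def)
  have "hdist (lin_kernel l (mat_of_rows R) (w @ False # u)) (lin_kernel l (mat_of_rows R) (w @ True # v))
      = weight (xorl (lincomb l R (w @ False # u)) (lincomb l R (w @ True # v)))"
    using len rows R by (simp add: lin_kernel_rows hdist_weight)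
  also have "\<dots> = weight (lincomb l R (xorl (w @ False # u) (w @ True # v)))"
    using len rows by (simp add: lincomb_xorl)
  also have "\<dots> = weight (lincomb l (drop i R) (True # xorl u v))"
    using lens i rows by (simp add: xorl_common_prefix lincomb_zeros_append)
  finally show ?thesis .
qed

lemma partial_dist_rows:
  assumes R: "square_rows l R" and i: "i < l"
    and lower: "\<And>z. length z = l - i - 1 \<Longrightarrow> d \<le> weight (lincomb l (drop i R) (True # z))"
    and row: "weight (R ! i) = d"
  shows "partial_dist l (lin_kernel l (mat_of_rows R)) i = d"
proof -
  let ?g = "lin_kernel l (mat_of_rows R)"
  define S where "S = {hdist (?g (w @ False # u)) (?g (w @ True # v)) | w u v.
      length w = i \<and> length u = l - i - 1 \<and> length v = l - i - 1}"
  have in_S: "\<exists>z. length z = l - i - 1 \<and> y = weight (lincomb l (drop i R) (True # z))" if y: "y \<in> S" for y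
  proof -
    obtain w u v where "length w = i" "length u = l - i - 1" "length v = l - i - 1"
      "y = hdist (?g (w @ False # u)) (?g (w @ True # v))"
      using y unfolding S_def by blast
    then show ?thesis using R i by (intro exI[of _ "xorl u v"]) (simp add: hdist_lin_kernel_rows)
  qed
  have "S \<subseteq> {..l}"
  proof
    fix y assume "y \<in> S"
    then obtain z where "y = weight (lincomb l (drop i R) (True # z))" using in_S by blast
    moreover have "\<forall>r\<in>set (drop i R). length r = l"
      using R by (auto simp: square_rows_def dest: in_set_dropD)
    ultimately show "y \<in> {..l}"
      using weight_le_length[of "lincomb l (drop i R) (True # z)"] by simp
  qed
  then have "finite S" by (rule finite_subset) simp
  have "drop i R = R ! i # drop (Suc i) R" "length (R ! i) = l"
    using R i by (simp_all add: Cons_nth_drop_Suc square_rows_def)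
  then have row_i: "lincomb l (drop i R) (True # replicate (l - i - 1) False) = R ! i"
    by (simp add: lincomb_zero xorl_zero_right)
  define zs where "zs = replicate (l - i - 1) False"
  have "hdist (?g (replicate i False @ False # zs)) (?g (replicate i False @ True # zs)) = d"
    using hdist_lin_kernel_rows[OF R i, of "replicate i False" zs zs] row_i row
    by (simp add: zs_def xorl_zero_left)
  moreover have "hdist (?g (replicate i False @ False # zs)) (?g (replicate i False @ True # zs)) \<in> S"
    unfolding S_def zs_def by (intro CollectI exI[of _ "replicate i False"]
        exI[of _ "replicate (l - i - 1) False"]) simp
  ultimately have "d \<in> S" by simp
  then have "Min S = d" using \<open>finite S\<close> lower in_S by (intro Min_eqI) auto
  then show ?thesis by (simp add: partial_dist_def S_def)
qed

text \<open>An invertible matrix maps 0^i 1 z to a nonzero vector: the coset never contains 0.\<close>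
lemma coset_weight_pos:
  assumes R: "square_rows l R" and H: "square_rows l H" and inv: "map (lincomb l H) R = id_rows l"
    and i: "i < l" and z: "length z = l - i - 1"
  shows "weight (lincomb l (drop i R) (True # z)) \<noteq> 0"
proof
  define x where "x = replicate i False @ True # z"
  have x: "length x = l" using i z by (simp add: x_def)
  have c: "lincomb l (drop i R) (True # z) = lincomb l R x"
    using R i by (simp add: x_def lincomb_zeros_append square_rows_def)
  have rows: "length R = l" "\<forall>r\<in>set R. length r = l"
    using R by (auto simp: square_rows_def)
  assume "weight (lincomb l (drop i R) (True # z)) = 0"
  then have zero: "lincomb l R x = replicate l False"
    using c rows weight_eq_0[of "lincomb l R x"] by simp
  have "x = lincomb l H (lincomb l R x)"
    using lincomb_left_inverse[OF R H inv x] by simp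
  also have "\<dots> = replicate l False" by (simp add: zero lincomb_zero)
  finally have "x = replicate l False" .
  moreover have "x ! i" by (simp add: x_def nth_append)
  ultimately show False using i by simp
qed

section \<open>The optimal exponent dominates every kernel exponent\<close>

lemma partial_dist_le_dim:
  assumes "is_kernel l g" "i < l"
  shows "partial_dist l g i \<le> l"
proof -
  define S where "S = {hdist (g (w @ False # u)) (g (w @ True # v)) | w u v.
      length w = i \<and> length u = l - i - 1 \<and> length v = l - i - 1}"
  have len: "length (g x) = l" if "length x = l" for x
    using assms(1) that unfolding is_kernel_def words_def by (auto dest: bij_betwE)
  have hdist_le: "hdist a b \<le> length a" for a b
    unfolding hdist_def by (rule order_trans[OF card_mono[of "{..<length a}"]]) auto
  have "S \<subseteq> {..l}"
    using assms(2) by (auto simp: S_def intro!: order_trans[OF hdist_le] simp: len)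
  moreover have "hdist (g (replicate i False @ False # replicate (l - i - 1) False))
      (g (replicate i False @ True # replicate (l - i - 1) False)) \<in> S"
    unfolding S_def by (intro CollectI exI[of _ "replicate i False"]
        exI[of _ "replicate (l - i - 1) False"]) simp
  then have "S \<noteq> {}" by blast
  ultimately have "Min S \<in> {..l}" using finite_subset Min_in by blast
  then show ?thesis by (simp add: partial_dist_def S_def)
qed

text \<open>Kernel exponents take only finitely many values (partial distances lie in {0..l}),
  so E_opt l is a genuine maximum.\<close>
lemma kernel_exponent_le_E_opt:
  assumes "is_kernel l g"
  shows "kernel_exponent l g \<le> E_opt l"
proof -
  define K where "K = {kernel_exponent l g | g. is_kernel l g}"
  define F where "F = (\<lambda>ds::nat list. (1 / real l) * (\<Sum>i<l. log (real l) (real (ds ! i))))"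
  have "K \<subseteq> F ` {ds. set ds \<subseteq> {..l} \<and> length ds = l}"
  proof
    fix y assume "y \<in> K"
    then obtain g where g: "is_kernel l g" and y: "y = kernel_exponent l g" by (auto simp: K_def)
    have "y = F (map (partial_dist l g) [0..<l])" by (simp add: y F_def kernel_exponent_def)
    moreover have "set (map (partial_dist l g) [0..<l]) \<subseteq> {..l}"
      using partial_dist_le_dim[OF g] by auto
    ultimately show "y \<in> F ` {ds. set ds \<subseteq> {..l} \<and> length ds = l}" by auto
  qed
  then have "finite K" by (rule finite_subset) (simp add: finite_lists_length_eq)
  moreover have "kernel_exponent l g \<in> K" using assms by (auto simp: K_def)
  ultimately have "kernel_exponent l g \<le> Max K" by (rule Max_ge)
  then show ?thesis unfolding E_opt_def K_def .
qed

section \<open>The 21 x 21 kernel\<close>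

definition bits_to_rows :: "string list \<Rightarrow> bool list list" where
  "bits_to_rows = map (map (\<lambda>c. c = CHR ''1''))"

text \<open>The generator matrix G (row i has weight pd_seq ! i), its inverse, and a parity-check
  matrix annihilating rows 6..20.\<close>
definition kernel_rows :: "bool list list" where
  "kernel_rows = bits_to_rows
    [''001000000000000000000'',
     ''000000000001000000010'',
     ''000000000000010001000'',
     ''000000000000011000000'',
     ''000010000100000000000'',
     ''000010000001000000000'',
     ''000000010011000001000'',
     ''100100000010000100000'',
     ''000100000100100000100'',
     ''000000100010001000100'',
     ''000000000000001010011'',
     ''100000000010100010000'',
     ''000100010001000111110'',
     ''111001000001011100000'',
     ''110001100100001001010'',
     ''000000001010101110110'',
     ''111000001010001011000'',
     ''000000100111101000011'',
     ''101110010111001011100'',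
     ''010111001011100101110'',
     ''001011100101110010111'']"

definition inverse_rows :: "bool list list" where
  "inverse_rows = bits_to_rows
    [''101100001100011011011'',
     ''110101011011111111100'',
     ''100000000000000000000'',
     ''100011011101101100110'',
     ''101010101010111001000'',
     ''101001011000110110100'',
     ''101111001111011010011'',
     ''101101001001000000100'',
     ''110111101101001011101'',
     ''101000101010111001000'',
     ''110000100100001100110'',
     ''101011101010111001000'',
     ''101110110111110110001'',
     ''111110100111110101010'',
     ''111010100111110101010'',
     ''111111100101111011011'',
     ''110010011110100001100'',
     ''110110100111110101010'',
     ''100101001000100011111'',
     ''111011101010111001000'',
     ''110011010001101101110'']"

definition check_rows :: "bool list list" where
  "check_rows = bits_to_rows
    [''010110'',
     ''101111'',
     ''001101'',
     ''101010'',
     ''111000'',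
     ''011111'',
     ''110001'',
     ''000111'',
     ''011001'',
     ''001110'',
     ''100110'',
     ''101001'',
     ''100000'',
     ''001011'',
     ''010011'',
     ''011010'',
     ''010000'',
     ''001000'',
     ''000100'',
     ''000010'',
     ''000001'']"

text \<open>Lets the simplifier unfold replicate 21 False while evaluating the checks below.\<close>
lemma replicate_numeral: "replicate (numeral k) x = x # replicate (pred_numeral k) x"
  by (simp add: numeral_eq_Suc)

lemma square_kernel_rows: "square_rows 21 kernel_rows"
  by (simp add: square_rows_def kernel_rows_def bits_to_rows_def)

lemma square_inverse_rows: "square_rows 21 inverse_rows"
  by (simp add: square_rows_def inverse_rows_def bits_to_rows_def)

lemma inverse_kernel_rows: "map (lincomb 21 inverse_rows) kernel_rows = id_rows 21"
  by (simp add: inverse_rows_def kernel_rows_def bits_to_rows_def id_rows_def upt_rec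
      replicate_numeral)

lemma kernel_inverse_rows: "map (lincomb 21 kernel_rows) inverse_rows = id_rows 21"
  by (simp add: inverse_rows_def kernel_rows_def bits_to_rows_def id_rows_def upt_rec
      replicate_numeral)

lemma weight_kernel_rows: "map weight kernel_rows = pd_seq"
  by (simp add: kernel_rows_def bits_to_rows_def pd_seq_def)

lemma kernel_rows_even: "\<forall>r\<in>set (drop 1 kernel_rows). even (weight r) \<and> length r = 21"
  by (simp add: kernel_rows_def bits_to_rows_def)

lemma check_rows_annihilate:
  "map (lincomb 6 check_rows) (drop 6 kernel_rows) = replicate 15 (replicate 6 False)"
  by (simp add: check_rows_def kernel_rows_def bits_to_rows_def replicate_numeral)

lemma check_rows_shape: "length check_rows = 21" "\<forall>h\<in>set check_rows. length h = 6"
  by (simp_all add: check_rows_def bits_to_rows_def)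

lemma check_rows_distinct: "distinct check_rows"
  by (simp add: check_rows_def bits_to_rows_def)

lemma kernel_rows_span_12:
  "check_span (\<lambda>c. weight c = 0 \<or> 8 \<le> weight c) (replicate 21 False) (drop 12 kernel_rows)"
  by (simp add: kernel_rows_def bits_to_rows_def replicate_numeral)

lemma kernel_rows_span_18:
  "check_span (\<lambda>c. weight c = 0 \<or> 12 \<le> weight c) (replicate 21 False) (drop 18 kernel_rows)"
  by (simp add: kernel_rows_def bits_to_rows_def replicate_numeral)

lemma pd_seq_nth:
  "i < 21 \<Longrightarrow> pd_seq ! i =
     (if i = 0 then 1 else if i < 6 then 2 else if i < 12 then 4 else if i < 18 then 8 else 12)"
  by (simp add: pd_seq_def less_Suc_eq numeral_eq_Suc) (elim disjE; simp)

lemma kernel_rows_coset_weight: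
  assumes i: "i < 21" and z: "length z = 20 - i"
  shows "pd_seq ! i \<le> weight (lincomb 21 (drop i kernel_rows) (True # z))"
proof -
  define c where "c = lincomb 21 (drop i kernel_rows) (True # z)"
  have R: "square_rows 21 kernel_rows" by (rule square_kernel_rows)
  have rows: "length kernel_rows = 21" "\<forall>r\<in>set kernel_rows. length r = 21"
    using R by (auto simp: square_rows_def)
  have pos: "weight c \<noteq> 0"
    using coset_weight_pos[OF R square_inverse_rows inverse_kernel_rows i] z by (simp add: c_def)
  have "c \<in> row_span 21 (drop i kernel_rows)"
    unfolding c_def using i z rows by (intro lincomb_in_row_span) simp
  then have span: "c \<in> row_span 21 (drop t kernel_rows)" if "t \<le> i" for t
    using row_span_drop_mono[of t i kernel_rows 21] that i rows by auto
  have rows_drop: "\<forall>r\<in>set (drop t kernel_rows). length r = 21" for t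
    using rows by (auto dest: in_set_dropD)
  have even: "even (weight c)" if "1 \<le> i"
    using row_span_even[OF kernel_rows_even span[OF that]] .
  have not_two: "weight c \<noteq> 2" if "6 \<le> i"
  proof
    assume "weight c = 2"
    moreover have "lincomb 6 check_rows c = replicate 6 False"
      using row_span_annihilated[OF _ _ _ _ span[OF that]] check_rows_annihilate check_rows_shape
        rows_drop rows by simp
    moreover have "length c = length check_rows"
      using rows check_rows_shape by (simp add: c_def rows_drop)
    ultimately show False
      using weight_two_detected[OF check_rows_distinct check_rows_shape(2)] by blast
  qed
  have ge8: "8 \<le> weight c" if "12 \<le> i"
    using check_span_sound[OF kernel_rows_span_12 rows_drop span[OF that]] pos by simp
  have ge12: "12 \<le> weight c" if "18 \<le> i"
    using check_span_sound[OF kernel_rows_span_18 rows_drop span[OF that]] pos by simp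
  show ?thesis
    unfolding c_def[symmetric] pd_seq_nth[OF i]
    using pos even not_two ge8 ge12 by presburger
qed

lemma kernel_rows_partial_dist:
  assumes i: "i < 21"
  shows "partial_dist 21 (lin_kernel 21 (mat_of_rows kernel_rows)) i = pd_seq ! i"
proof (rule partial_dist_rows[OF square_kernel_rows i])
  show "weight (kernel_rows ! i) = pd_seq ! i"
    using i square_kernel_rows by (simp add: weight_kernel_rows[symmetric] square_rows_def)
  show "pd_seq ! i \<le> weight (lincomb 21 (drop i kernel_rows) (True # z))"
    if "length z = 21 - i - 1" for z
    using kernel_rows_coset_weight[OF i] that by simp
qed

theorem mainTheorem16:
  shows "(\<exists>G. binvertible 21 G \<and>
            (\<forall>i<21. partial_dist 21 (lin_kernel 21 G) i = pd_seq ! i))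
         \<and> E_opt 21 \<ge> (1 / 21) * (\<Sum>i<21. log 21 (real (pd_seq ! i)))"
proof
  let ?G = "mat_of_rows kernel_rows"
  have "binvertible 21 ?G"
    using binvertible_rows square_kernel_rows square_inverse_rows inverse_kernel_rows
      kernel_inverse_rows by blast
  then show "\<exists>G. binvertible 21 G \<and> (\<forall>i<21. partial_dist 21 (lin_kernel 21 G) i = pd_seq ! i)"
    using kernel_rows_partial_dist by blast
  have "kernel_exponent 21 (lin_kernel 21 ?G) = (1 / 21) * (\<Sum>i<21. log 21 (real (pd_seq ! i)))"
    by (simp add: kernel_exponent_def kernel_rows_partial_dist)
  moreover have "is_kernel 21 (lin_kernel 21 ?G)"
    using is_kernel_rows square_kernel_rows square_inverse_rows inverse_kernel_rows by blast
  ultimately show "E_opt 21 \<ge> (1 / 21) * (\<Sum>i<21. log 21 (real (pd_seq ! i)))"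
    using kernel_exponent_le_E_opt by metis
qed

end
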